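(* Assume (A1)–(A2), let $r>0$, $\vec\xi\in\mathbb{R}^n$, $\beta:\mathrm{T}_r\to\mathbb{R}^n$ and $g:\mathrm{T}_r\to\mathbb{R}$ continuous, and let $u$ be a viscosity solution of $$\begin{cases}\mathcal{H}(x,Du-\vec\xi)F(D^2u)=0&\text{in }\mathrm{B}_r^+,\\ \beta\cdot Du=g(x)&\text{on }\mathrm{T}_r.\end{cases}$$ Then $u$ is also a viscosity solution of $$\begin{cases}F(D^2u)=0&\text{in }\mathrm{B}_r^+,\\ \beta\cdot Du=g(x)&\text{on }\mathrm{T}_r.\end{cases}$$
   Context: $\mathrm{B}_r^+=\mathrm{B}_r\cap\{x_n>0\}$, $\mathrm{T}_r=\{(x',0):|x'|<r\}$. $\mathcal{H}(x,\vec\zeta)=|\vec\zeta|^p+\mathfrak{a}(x)|\vec\zeta|^q$. (A1) $F:\mathrm{Sym}(n)\to\mathbb{R}$ satisfies $\mathcal{P}^-_{\lambda,\Lambda}(M-N)\le F(M)-F(N)\le\mathcal{P}^+_{\lambda,\Lambda}(M-N)$, $0<\lambda\le\Lambda$, $F(0)=0$, where for $M$ with eigenvalues $e_i$, $\mathcal{P}^+_{\lambda,\Lambda}(M)=\Lambda\sum_{e_i>0}e_i+\lambda\sum_{e_i<0}e_i$, $\mathcal{P}^-_{\lambda,\Lambda}(M)=\lambda\sum_{e_i>0}e_i+\Lambda\sum_{e_i<0}e_i$. (A2) $0<p\le q$, $\mathfrak{a}$ continuous and $\ge0$. Viscosity solutions: for $\varphi\in C^2$ touching $u$ from above (below) at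 $x_0$, the interior inequality $\ge(\le)$ for the equation holds if $x_0\in\mathrm{B}_r^+$, and $\beta(x_0)\cdot D\varphi(x_0)\ge(\le)g(x_0)$ if $x_0\in\mathrm{T}_r$. *)

theory Defs
  imports "HOL-Analysis.Analysis"
begin

definition sym_matrix :: "real^'n^'n \<Rightarrow> bool" where
  "sym_matrix M \<longleftrightarrow> transpose M = M"

definition diag_mat :: "real^'n \<Rightarrow> real^'n^'n" where
  "diag_mat e = (\<chi> i j. if i = j then e $ i else 0)"

text \<open>The eigenvalues (with multiplicity) of a symmetric M are the diagonal
  entries e of any spectral decomposition M = Q diag(e) Q^T, Q orthogonal.\<close>
definition pucci_plus :: "real \<Rightarrow> real \<Rightarrow> real^'n^'n \<Rightarrow> real" where
  "pucci_plus lam Lam M = (SOME s. \<exists>Q e. orthogonal_matrix Q \<and>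
      M = Q ** diag_mat e ** transpose Q \<and>
      s = Lam * (\<Sum>i\<in>{i. e $ i > 0}. e $ i) + lam * (\<Sum>i\<in>{i. e $ i < 0}. e $ i))"

definition pucci_minus :: "real \<Rightarrow> real \<Rightarrow> real^'n^'n \<Rightarrow> real" where
  "pucci_minus lam Lam M = (SOME s. \<exists>Q e. orthogonal_matrix Q \<and>
      M = Q ** diag_mat e ** transpose Q \<and>
      s = lam * (\<Sum>i\<in>{i. e $ i > 0}. e $ i) + Lam * (\<Sum>i\<in>{i. e $ i < 0}. e $ i))"

definition A1 :: "real \<Rightarrow> real \<Rightarrow> (real^'n^'n \<Rightarrow> real) \<Rightarrow> bool" where
  "A1 lam Lam F \<longleftrightarrow> 0 < lam \<and> lam \<le> Lam \<and> F 0 = 0 \<and>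
     (\<forall>M N. sym_matrix M \<longrightarrow> sym_matrix N \<longrightarrow>
        pucci_minus lam Lam (M - N) \<le> F M - F N \<and> F M - F N \<le> pucci_plus lam Lam (M - N))"

text \<open>The upper half ball and its flat boundary portion; the distinguished
  (``last'') coordinate is the index k.\<close>
definition half_ball :: "'n \<Rightarrow> real \<Rightarrow> (real^'n) set" where
  "half_ball k r = {x. norm x < r \<and> x $ k > 0}"

definition flat_part :: "'n \<Rightarrow> real \<Rightarrow> (real^'n) set" where
  "flat_part k r = {x. norm x < r \<and> x $ k = 0}"

definition Hfun :: "real \<Rightarrow> real \<Rightarrow> (real^'n \<Rightarrow> real) \<Rightarrow> real^'n \<Rightarrow> real^'n \<Rightarrow> real" where
  "Hfun p q a x z = norm z powr p + a x * norm z powr q"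

definition C2_on_with :: "(real^'n \<Rightarrow> real) \<Rightarrow> (real^'n \<Rightarrow> real^'n) \<Rightarrow> (real^'n \<Rightarrow> real^'n^'n)
    \<Rightarrow> (real^'n) set \<Rightarrow> bool" where
  "C2_on_with phi Dphi D2phi S \<longleftrightarrow> open S \<and>
     (\<forall>x\<in>S. (phi has_derivative (\<lambda>h. Dphi x \<bullet> h)) (at x)) \<and>
     (\<forall>x\<in>S. (Dphi has_derivative (\<lambda>h. D2phi x *v h)) (at x)) \<and>
     continuous_on S D2phi"

definition visc_sub :: "'n \<Rightarrow> real \<Rightarrow> (real^'n \<Rightarrow> real^'n \<Rightarrow> real^'n^'n \<Rightarrow> real)
    \<Rightarrow> (real^'n \<Rightarrow> real^'n) \<Rightarrow> (real^'n \<Rightarrow> real) \<Rightarrow> (real^'n \<Rightarrow> real) \<Rightarrow> bool" where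
  "visc_sub k r G beta g u \<longleftrightarrow>
     (\<forall>phi Dphi D2phi S x0. C2_on_with phi Dphi D2phi S \<and> x0 \<in> S \<and>
        x0 \<in> half_ball k r \<union> flat_part k r \<and> u x0 = phi x0 \<and>
        (\<forall>x \<in> S \<inter> (half_ball k r \<union> flat_part k r). u x \<le> phi x) \<longrightarrow>
        (x0 \<in> half_ball k r \<longrightarrow> G x0 (Dphi x0) (D2phi x0) \<ge> 0) \<and>
        (x0 \<in> flat_part k r \<longrightarrow> beta x0 \<bullet> Dphi x0 \<ge> g x0))"

definition visc_super :: "'n \<Rightarrow> real \<Rightarrow> (real^'n \<Rightarrow> real^'n \<Rightarrow> real^'n^'n \<Rightarrow> real)
    \<Rightarrow> (real^'n \<Rightarrow> real^'n) \<Rightarrow> (real^'n \<Rightarrow> real) \<Rightarrow> (real^'n \<Rightarrow> real) \<Rightarrow> bool" where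
  "visc_super k r G beta g u \<longleftrightarrow>
     (\<forall>phi Dphi D2phi S x0. C2_on_with phi Dphi D2phi S \<and> x0 \<in> S \<and>
        x0 \<in> half_ball k r \<union> flat_part k r \<and> u x0 = phi x0 \<and>
        (\<forall>x \<in> S \<inter> (half_ball k r \<union> flat_part k r). phi x \<le> u x) \<longrightarrow>
        (x0 \<in> half_ball k r \<longrightarrow> G x0 (Dphi x0) (D2phi x0) \<le> 0) \<and>
        (x0 \<in> flat_part k r \<longrightarrow> beta x0 \<bullet> Dphi x0 \<le> g x0))"

definition visc_sol :: "'n \<Rightarrow> real \<Rightarrow> (real^'n \<Rightarrow> real^'n \<Rightarrow> real^'n^'n \<Rightarrow> real)
    \<Rightarrow> (real^'n \<Rightarrow> real^'n) \<Rightarrow> (real^'n \<Rightarrow> real) \<Rightarrow> (real^'n \<Rightarrow> real) \<Rightarrow> bool" where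
  "visc_sol k r G beta g u \<longleftrightarrow>
     continuous_on (half_ball k r \<union> flat_part k r) u \<and>
     visc_sub k r G beta g u \<and> visc_super k r G beta g u"

end

theory Submission
  imports Defs
begin

text \<open>The boundary condition is untouched, and at an interior contact point where the gradient
  of the test function differs from \<open>\<xi>\<close> the factor \<open>H\<close> is positive and cancels.  When the
  gradient equals \<open>\<xi>\<close> and the test function has Hessian \<open>M\<close>, a second-order expansion puts
  \<open>u\<close> strictly below a quadratic with Hessian \<open>M + \<epsilon>I\<close>.  If that matrix is positive
  semidefinite, ellipticity gives \<open>F(M + \<epsilon>I) \<ge> 0\<close>; otherwise tilting the quadratic along a
  direction of negative curvature moves the contact point to one where the gradient is not
  \<open>\<xi>\<close>, and the equation gives the same inequality.  As \<open>F(M + cI) \<le> F(M) + n\<Lambda>c\<close>,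
  letting \<open>\<epsilon> \<rightarrow> 0\<close> yields \<open>F(M) \<ge> 0\<close>.  Supersolutions are handled by passing to \<open>-u\<close> and
  the operator \<open>-F(-X)\<close>, which again satisfies (A1).\<close>

section \<open>Positive semidefinite matrices\<close>

definition psd_matrix :: "real^'n^'n \<Rightarrow> bool" where
  "psd_matrix D \<longleftrightarrow> (\<forall>x. 0 \<le> x \<bullet> (D *v x))"

definition outer_product :: "real^'n \<Rightarrow> real^'n^'n" where
  "outer_product v = (\<chi> i j. v$i * v$j)"

lemma sym_matrix_entry: "sym_matrix M \<Longrightarrow> M$i$j = M$j$i"
  unfolding sym_matrix_def by (metis transpose_def vec_lambda_beta)

lemma sym_matrix_0: "sym_matrix (0 :: real^'n^'n)"
  and sym_matrix_mat: "sym_matrix (mat c :: real^'n^'n)"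
  and sym_matrix_add: "sym_matrix A \<Longrightarrow> sym_matrix B \<Longrightarrow> sym_matrix (A + B)"
  and sym_matrix_diff: "sym_matrix A \<Longrightarrow> sym_matrix B \<Longrightarrow> sym_matrix (A - B)"
  and sym_matrix_uminus: "sym_matrix A \<Longrightarrow> sym_matrix (- A)"
  and sym_matrix_outer_product: "sym_matrix (outer_product v)"
  by (auto simp: sym_matrix_def transpose_def outer_product_def mat_def vec_eq_iff mult.commute)

lemma sym_matrix_inner: "sym_matrix A \<Longrightarrow> (A *v x) \<bullet> y = x \<bullet> (A *v (y::real^'n))"
  unfolding sym_matrix_def by (metis dot_lmul_matrix vector_transpose_matrix)

lemma matrix_vector_mult_mat: "mat c *v x = c *\<^sub>R (x::real^'n)"
  by (simp add: mat_def matrix_vector_mult_def vec_eq_iff if_distrib [of "\<lambda>x. x * y" for y] cong: if_cong)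

lemma matrix_vector_mult_uminus: "(- A) *v v = - (A *v (v::real^'n))"
  by (simp add: matrix_vector_mult_def vec_eq_iff sum_negf)

lemma inner_axis_matrix_axis: "axis i 1 \<bullet> (D *v axis j 1) = (D::real^'n^'n)$i$j"
  by (simp add: matrix_vector_mult_basis column_def inner_axis')

lemma outer_product_mult: "outer_product v *v x = (v \<bullet> x) *\<^sub>R (v::real^'n)"
  by (simp add: outer_product_def matrix_vector_mult_def inner_vec_def vec_eq_iff sum_distrib_left mult_ac)

lemma psd_matrix_outer_product: "psd_matrix (outer_product v)"
  by (simp add: psd_matrix_def outer_product_mult inner_commute)

lemma psd_matrix_diag_zero:
  fixes D :: "real^'n^'n"
  assumes psd: "psd_matrix D" and sym: "sym_matrix D" and zero: "D$j$j = 0"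
  shows "D$i$j = 0"
proof (rule ccontr)
  assume nz: "D$i$j \<noteq> 0"
  define t where "t = - (\<bar>D$i$i\<bar> + 1) / (2 * D$i$j)"
  let ?x = "axis i 1 + t *\<^sub>R axis j 1"
  have "?x \<bullet> (D *v ?x) = D$i$i + t * D$i$j + t * D$j$i + t * t * D$j$j"
    by (simp add: inner_axis_matrix_axis algebra_simps)
  also have "\<dots> = D$i$i - (\<bar>D$i$i\<bar> + 1)"
    using zero nz sym_matrix_entry[OF sym, of j i] by (simp add: t_def)
  also have "\<dots> < 0" by simp
  finally show False using psd unfolding psd_matrix_def by (meson not_le)
qed

text \<open>One Cholesky step: the Schur complement of a positive pivot is positive semidefinite.\<close>
lemma psd_matrix_split_outer_product:
  fixes D :: "real^'n^'n"
  assumes psd: "psd_matrix D" and sym: "sym_matrix D" and pos: "D$j$j > 0"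
  defines "v \<equiv> (1 / sqrt (D$j$j)) *\<^sub>R (\<chi> i. D$i$j)"
  shows "psd_matrix (D - outer_product v)"
    and "\<And>i l. outer_product v $ i $ l = D$i$j * D$l$j / D$j$j"
proof -
  define \<alpha> where "\<alpha> = D$j$j"
  define c where "c = (\<chi> i. D$i$j)"
  show "\<And>i l. outer_product v $ i $ l = D$i$j * D$l$j / D$j$j"
    using pos by (simp add: outer_product_def v_def real_sqrt_mult[symmetric])
  show "psd_matrix (D - outer_product v)"
    unfolding psd_matrix_def
  proof
    fix x :: "real^'n"
    define s where "s = (c \<bullet> x) / \<alpha>"
    have col: "x \<bullet> (D *v axis j 1) = c \<bullet> x"
      by (simp add: matrix_vector_mult_basis column_def c_def inner_commute)
    have row: "axis j 1 \<bullet> (D *v x) = c \<bullet> x"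
      using col sym_matrix_inner[OF sym, of "axis j 1" x] by (simp add: inner_commute)
    let ?y = "x - s *\<^sub>R axis j 1"
    have "0 \<le> ?y \<bullet> (D *v ?y)" using psd unfolding psd_matrix_def by blast
    also have "?y \<bullet> (D *v ?y) = x \<bullet> (D *v x) - s * (x \<bullet> (D *v axis j 1))
        - s * (axis j 1 \<bullet> (D *v x)) + s * s * \<alpha>"
      by (simp add: inner_axis_matrix_axis \<alpha>_def algebra_simps)
    also have "\<dots> = x \<bullet> (D *v x) - (c \<bullet> x)^2 / \<alpha>"
      using pos by (simp add: row col s_def \<alpha>_def field_simps power2_eq_square)
    also have "\<dots> = x \<bullet> ((D - outer_product v) *v x)"
      using pos by (simp add: matrix_vector_mult_diff_rdistrib outer_product_mult inner_diff
          v_def c_def[symmetric] \<alpha>_def power2_eq_square real_sqrt_mult[symmetric] field_simps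
          inner_commute[of x c])
    finally show "0 \<le> x \<bullet> ((D - outer_product v) *v x)" .
  qed
qed

text \<open>The Pucci operators are defined through a spectral decomposition chosen by \<open>SOME\<close>, which
  can be exhibited explicitly for rank-one matrices; this decomposition reduces the monotonicity
  of \<open>F\<close> to rank-one increments.\<close>
lemma psd_matrix_sum_outer_products:
  fixes D :: "real^'n^'n"
  assumes "psd_matrix D" and "sym_matrix D"
  shows "\<exists>vs. D = sum_list (map outer_product vs)"
proof -
  have "finite J \<Longrightarrow> psd_matrix D \<Longrightarrow> sym_matrix D \<Longrightarrow> (\<forall>i l. D$i$l \<noteq> 0 \<longrightarrow> i \<in> J \<and> l \<in> J)
      \<Longrightarrow> \<exists>vs. D = sum_list (map outer_product vs)" for J and D :: "real^'n^'n"
  proof (induction J arbitrary: D rule: finite_induct)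
    case empty
    then have "D = 0" by (simp add: vec_eq_iff)
    then show ?case by (intro exI[of _ "[]"]) simp
  next
    case (insert j J)
    have "0 \<le> axis j 1 \<bullet> (D *v axis j 1)"
      using insert.prems(1) unfolding psd_matrix_def by blast
    then have "D$j$j \<ge> 0" by (simp add: inner_axis_matrix_axis)
    then consider "D$j$j = 0" | "D$j$j > 0" by linarith
    then show ?case
    proof cases
      case 1
      have "D$i$j = 0" "D$j$i = 0" for i
        using psd_matrix_diag_zero[OF insert.prems(1,2) 1, of i] sym_matrix_entry[OF insert.prems(2), of j i]
        by simp_all
      then have "\<forall>i l. D$i$l \<noteq> 0 \<longrightarrow> i \<in> J \<and> l \<in> J"
        using insert.prems(3) by blast
      then show ?thesis using insert.IH insert.prems(1,2) by blast
    next
      case 2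
      define v where "v = (1 / sqrt (D$j$j)) *\<^sub>R (\<chi> i. D$i$j)"
      note split = psd_matrix_split_outer_product[OF insert.prems(1,2) 2, folded v_def]
      have "(D - outer_product v)$i$l = 0" if "i \<notin> J \<or> l \<notin> J" for i l
      proof (cases "i = j \<or> l = j")
        case True
        have "D$j$j * D$l$j / D$j$j = D$j$l" "D$i$j * D$j$j / D$j$j = D$i$j"
          using 2 sym_matrix_entry[OF insert.prems(2), of j l] by simp_all
        with True show ?thesis by (auto simp: split(2))
      next
        case False
        then have "D$i$l = 0" "D$i$j = 0 \<or> D$l$j = 0"
          using that insert.prems(3) by blast+
        then show ?thesis by (auto simp: split(2))
      qed
      then have "\<forall>i l. (D - outer_product v)$i$l \<noteq> 0 \<longrightarrow> i \<in> J \<and> l \<in> J"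
        by blast
      then obtain vs where "D - outer_product v = sum_list (map outer_product vs)"
        using insert.IH split(1) sym_matrix_diff[OF insert.prems(2) sym_matrix_outer_product]
        by blast
      then have "D = sum_list (map outer_product (v # vs))" by (simp add: diff_eq_eq add.commute)
      then show ?thesis ..
    qed
  qed
  from this[OF finite[of UNIV] assms] show ?thesis by simp
qed

section \<open>Pucci operators and uniform ellipticity\<close>

lemma diag_mat_mult_axis: "diag_mat e *v axis i 1 = e$i *\<^sub>R axis i 1"
  by (simp add: diag_mat_def matrix_vector_mult_def axis_def vec_eq_iff
      if_distrib[of "\<lambda>x. x * _"] sum.delta' cong: if_cong)

lemma orthogonal_decomposition_diag_entry:
  fixes Q :: "real^'n^'n"
  assumes Q: "orthogonal_matrix Q" and D: "D = Q ** diag_mat e ** transpose Q"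
  shows "e$i = (Q *v axis i 1) \<bullet> (D *v (Q *v axis i 1))"
proof -
  have "D *v (Q *v axis i 1) = Q *v (diag_mat e *v ((transpose Q ** Q) *v axis i 1))"
    by (simp add: D matrix_vector_mul_assoc matrix_mul_assoc)
  also have "\<dots> = e$i *\<^sub>R (Q *v axis i 1)"
    using Q by (simp add: orthogonal_matrix diag_mat_mult_axis matrix_vector_mult_scaleR)
  finally have "D *v (Q *v axis i 1) = e$i *\<^sub>R (Q *v axis i 1)" .
  moreover have "norm (Q *v axis i 1) = 1"
    using Q by (simp add: matrix_vector_mult_basis orthogonal_matrix_orthonormal_columns)
  ultimately show ?thesis by (simp add: dot_square_norm power2_eq_square)
qed

lemma pucci_minus_eq_some_decomposition:
  assumes "\<exists>Q e. orthogonal_matrix Q \<and> D = Q ** diag_mat e ** transpose Q"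
  obtains Q e where "orthogonal_matrix Q" "D = Q ** diag_mat e ** transpose Q"
    "pucci_minus lam Lam D = lam * (\<Sum>i\<in>{i. e $ i > 0}. e $ i) + Lam * (\<Sum>i\<in>{i. e $ i < 0}. e $ i)"
proof -
  let ?P = "\<lambda>s. \<exists>Q e. orthogonal_matrix Q \<and> D = Q ** diag_mat e ** transpose Q \<and>
      s = lam * (\<Sum>i\<in>{i. e $ i > 0}. e $ i) + Lam * (\<Sum>i\<in>{i. e $ i < 0}. e $ i)"
  have "\<exists>s. ?P s" using assms by blast
  then have "?P (pucci_minus lam Lam D)" unfolding pucci_minus_def by (rule someI_ex)
  then show ?thesis using that by blast
qed

lemma pucci_minus_nonneg:
  assumes "0 \<le> lam" and "psd_matrix D"
    and "\<exists>Q e. orthogonal_matrix Q \<and> D = Q ** diag_mat e ** transpose Q"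
  shows "0 \<le> pucci_minus lam Lam D"
proof -
  obtain Q e where Q: "orthogonal_matrix Q" "D = Q ** diag_mat e ** transpose Q"
    and s: "pucci_minus lam Lam D = lam * (\<Sum>i\<in>{i. e $ i > 0}. e $ i) + Lam * (\<Sum>i\<in>{i. e $ i < 0}. e $ i)"
    using assms(3) by (rule pucci_minus_eq_some_decomposition[where lam = lam and Lam = Lam])
  have "e$i \<ge> 0" for i
    using orthogonal_decomposition_diag_entry[OF Q] assms(2) unfolding psd_matrix_def by metis
  then have "{i. e $ i < 0} = {}" by (simp add: not_less)
  moreover have "(\<Sum>i\<in>{i. e $ i > 0}. e $ i) \<ge> 0" by (rule sum_nonneg) simp
  ultimately show ?thesis using s assms(1) by simp
qed

lemma pucci_minus_mat:
  assumes "c < 0"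
  shows "pucci_minus lam Lam (mat c :: real^'n^'n) = Lam * (real CARD('n) * c)"
proof -
  have "diag_mat (\<chi> i. c) = (mat c :: real^'n^'n)"
    by (simp add: diag_mat_def mat_def vec_eq_iff)
  then have "mat c = mat 1 ** diag_mat (\<chi> i. c) ** transpose (mat 1 :: real^'n^'n)"
    by (simp add: matrix_mul_lid matrix_mul_rid transpose_mat)
  then have "\<exists>Q e. orthogonal_matrix Q \<and> (mat c :: real^'n^'n) = Q ** diag_mat e ** transpose Q"
    using orthogonal_matrix_id by blast
  then obtain Q e where Q: "orthogonal_matrix Q" "(mat c :: real^'n^'n) = Q ** diag_mat e ** transpose Q"
    and s: "pucci_minus lam Lam (mat c :: real^'n^'n)
      = lam * (\<Sum>i\<in>{i. e $ i > 0}. e $ i) + Lam * (\<Sum>i\<in>{i. e $ i < 0}. e $ i)"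
    by (rule pucci_minus_eq_some_decomposition[where lam = lam and Lam = Lam])
  have "e$i = c" for i
  proof -
    have "norm (Q *v axis i 1) = 1"
      using Q by (simp add: matrix_vector_mult_basis orthogonal_matrix_orthonormal_columns)
    then show ?thesis
      using orthogonal_decomposition_diag_entry[OF Q, of i]
      by (simp add: matrix_vector_mult_mat dot_square_norm)
  qed
  then have "{i. e $ i < 0} = UNIV" "{i. e $ i > 0} = {}" using assms by auto
  then show ?thesis using s \<open>\<And>i. e$i = c\<close> by simp
qed

lemma outer_product_orthogonal_decomposition:
  "\<exists>Q e. orthogonal_matrix Q \<and> outer_product v = Q ** diag_mat e ** transpose Q"
proof (cases "v = 0")
  case True
  then have "outer_product v = mat 1 ** diag_mat 0 ** transpose (mat 1)"
    by (simp add: outer_product_def diag_mat_def vec_eq_iff)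
  then show ?thesis using orthogonal_matrix_id by blast
next
  case False
  fix k
  have "norm (v /\<^sub>R norm v) = 1" using False by simp
  then obtain Q where Q: "orthogonal_matrix Q" "Q *v axis k 1 = v /\<^sub>R norm v"
    using orthogonal_matrix_exists_basis by blast
  then have col: "Q$i$k = v$i / norm v" for i
    by (simp add: matrix_vector_mult_basis column_def vec_eq_iff divide_inverse mult.commute)
  have "(Q ** diag_mat (axis k ((norm v)^2)) ** transpose Q)$i$j = Q$i$k * (norm v)^2 * Q$j$k" for i j
    by (simp add: matrix_matrix_mult_def diag_mat_def axis_def transpose_def
        if_distrib [of "\<lambda>x. x * y" for y] if_distrib [of "\<lambda>x. y * x" for y] cong: if_cong)
  then have "outer_product v = Q ** diag_mat (axis k ((norm v)^2)) ** transpose Q"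
    using False by (simp add: outer_product_def vec_eq_iff col power2_eq_square)
  then show ?thesis using Q(1) by blast
qed

lemma A1_pucci_minus_le:
  "A1 lam Lam F \<Longrightarrow> sym_matrix M \<Longrightarrow> sym_matrix N \<Longrightarrow> pucci_minus lam Lam (M - N) \<le> F M - F N"
  unfolding A1_def by blast

lemma A1_mono_sum_outer_products:
  assumes F: "A1 lam Lam F" and Y: "sym_matrix Y"
  shows "F Y \<le> F (Y + sum_list (map outer_product vs))"
  using Y
proof (induction vs arbitrary: Y)
  case Nil
  then show ?case by simp
next
  case (Cons v vs)
  have sym: "sym_matrix (Y + outer_product v)"
    using Cons.prems by (intro sym_matrix_add sym_matrix_outer_product)
  have "0 \<le> pucci_minus lam Lam (outer_product v)"
    using F psd_matrix_outer_product outer_product_orthogonal_decomposition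
    by (intro pucci_minus_nonneg) (auto simp: A1_def)
  also have "\<dots> \<le> F (Y + outer_product v) - F Y"
    using A1_pucci_minus_le[OF F sym Cons.prems] by simp
  finally have "F Y \<le> F (Y + outer_product v)" by simp
  also have "\<dots> \<le> F (Y + outer_product v + sum_list (map outer_product vs))"
    by (rule Cons.IH[OF sym])
  finally show ?case by (simp add: add.assoc)
qed

lemma A1_mono:
  assumes F: "A1 lam Lam F" and "sym_matrix X" "sym_matrix Y" "psd_matrix (X - Y)"
  shows "F Y \<le> F X"
proof -
  obtain vs where "X - Y = sum_list (map outer_product vs)"
    using psd_matrix_sum_outer_products sym_matrix_diff assms(2-4) by blast
  then show ?thesis
    using A1_mono_sum_outer_products[OF F assms(3), of vs] by (simp add: diff_eq_eq add.commute)
qed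

lemma A1_nonneg:
  assumes "A1 lam Lam F" "sym_matrix A" "psd_matrix A"
  shows "0 \<le> F A"
  using A1_mono[OF assms(1,2) sym_matrix_0] assms by (simp add: A1_def)

lemma A1_add_mat:
  fixes F :: "real^'n^'n \<Rightarrow> real"
  assumes F: "A1 lam Lam F" and Y: "sym_matrix Y" and c: "c > 0"
  shows "F (Y + mat c) \<le> F Y + Lam * real CARD('n) * c"
proof -
  have "Y - (Y + mat c) = mat (- c)" by (simp add: mat_def vec_eq_iff)
  then have "Lam * (real CARD('n) * - c) = pucci_minus lam Lam (Y - (Y + mat c))"
    using c by (simp add: pucci_minus_mat)
  also have "\<dots> \<le> F Y - F (Y + mat c)"
    using A1_pucci_minus_le[OF F Y sym_matrix_add[OF Y sym_matrix_mat]] .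
  finally show ?thesis by (simp add: algebra_simps)
qed

lemma A1_nonneg_of_nonneg_add_mat:
  fixes F :: "real^'n^'n \<Rightarrow> real"
  assumes F: "A1 lam Lam F" and M: "sym_matrix M" and perturbed: "\<And>e. e > 0 \<Longrightarrow> 0 \<le> F (M + mat e)"
  shows "0 \<le> F M"
proof (rule field_le_epsilon)
  fix \<epsilon> :: real
  assume "\<epsilon> > 0"
  define K where "K = Lam * real CARD('n)"
  have K: "K > 0" using F by (auto simp: A1_def K_def)
  have "0 \<le> F (M + mat (\<epsilon> / K))" using perturbed K \<open>\<epsilon> > 0\<close> by simp
  also have "\<dots> \<le> F M + K * (\<epsilon> / K)"
    using A1_add_mat[OF F M, of "\<epsilon> / K"] K \<open>\<epsilon> > 0\<close> by (simp add: K_def)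
  also have "\<dots> = F M + \<epsilon>" using K by simp
  finally show "0 \<le> F M + \<epsilon>" .
qed

lemma A1_uminus_conj:
  fixes F :: "real^'n^'n \<Rightarrow> real"
  assumes "A1 lam Lam F"
  shows "A1 lam Lam (\<lambda>M. - F (- M))"
  unfolding A1_def
proof (intro conjI allI impI)
  fix M N :: "real^'n^'n"
  assume "sym_matrix M" "sym_matrix N"
  then have "pucci_minus lam Lam (- N - - M) \<le> F (- N) - F (- M) \<and>
      F (- N) - F (- M) \<le> pucci_plus lam Lam (- N - - M)"
    using assms sym_matrix_uminus unfolding A1_def by blast
  then show "pucci_minus lam Lam (M - N) \<le> - F (- M) - - F (- N)"
    and "- F (- M) - - F (- N) \<le> pucci_plus lam Lam (M - N)"
    by simp_all
qed (use assms in \<open>auto simp: A1_def\<close>)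

section \<open>Second-order expansions\<close>

lemma has_real_derivative_along_line:
  fixes phi :: "'a::real_inner \<Rightarrow> real"
  assumes "(phi has_derivative (\<lambda>h. Dphi (p + t *\<^sub>R q) \<bullet> h)) (at (p + t *\<^sub>R q))"
  shows "((\<lambda>t. phi (p + t *\<^sub>R q)) has_real_derivative (Dphi (p + t *\<^sub>R q) \<bullet> q)) (at t)"
proof -
  have "((\<lambda>t. p + t *\<^sub>R q) has_derivative (\<lambda>h. h *\<^sub>R q)) (at t)"
    by (auto intro!: derivative_eq_intros)
  from diff_chain_at[OF this assms]
  have "((\<lambda>t. phi (p + t *\<^sub>R q)) has_derivative (\<lambda>h. Dphi (p + t *\<^sub>R q) \<bullet> (h *\<^sub>R q))) (at t)"
    by (simp add: o_def)
  then show ?thesis unfolding has_field_derivative_def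
    by (rule has_derivative_eq_rhs) (auto simp: fun_eq_iff mult.commute)
qed

lemma has_derivative_remainder_bound:
  assumes "(f has_derivative f') (at x0)" "e > 0"
  shows "\<exists>d>0. \<forall>y. norm y < d \<longrightarrow> norm (f (x0 + y) - f x0 - f' y) \<le> e * norm y"
proof -
  obtain d where "d > 0"
    and d: "\<forall>x. norm (x - x0) < d \<longrightarrow> norm (f x - f x0 - f' (x - x0)) \<le> e * norm (x - x0)"
    using assms unfolding has_derivative_at_alt by blast
  have "norm (f (x0 + y) - f x0 - f' y) \<le> e * norm y" if "norm y < d" for y
    using d[rule_format, of "x0 + y"] that by simp
  with \<open>d > 0\<close> show ?thesis by blast
qed

lemma has_derivative_increment_bound:
  assumes "(f has_derivative f') (at x0)" "e > 0"
  obtains d where "d > 0" "\<And>w w'. norm w < d \<Longrightarrow> norm w' < d \<Longrightarrow>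
    norm (f (x0 + w) - f (x0 + w') - f' (w - w')) \<le> e * (norm w + norm w')"
proof -
  obtain d where "d > 0" and d: "\<forall>y. norm y < d \<longrightarrow> norm (f (x0 + y) - f x0 - f' y) \<le> e * norm y"
    using has_derivative_remainder_bound[OF assms] by blast
  have "norm (f (x0 + w) - f (x0 + w') - f' (w - w')) \<le> e * (norm w + norm w')"
    if "norm w < d" "norm w' < d" for w w'
  proof -
    have "f (x0 + w) - f (x0 + w') - f' (w - w')
        = (f (x0 + w) - f x0 - f' w) - (f (x0 + w') - f x0 - f' w')"
      using linear_diff[OF has_derivative_linear[OF assms(1)]] by simp
    also have "norm \<dots> \<le> norm (f (x0 + w) - f x0 - f' w) + norm (f (x0 + w') - f x0 - f' w')"
      by (rule norm_triangle_ineq4)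
    also have "\<dots> \<le> e * norm w + e * norm w'"
      using add_mono[OF d[rule_format, OF that(1)] d[rule_format, OF that(2)]] .
    finally show ?thesis by (simp add: distrib_left)
  qed
  with \<open>d > 0\<close> show ?thesis by (rule that)
qed

lemma second_order_expansion:
  fixes phi :: "real^'n \<Rightarrow> real"
  assumes S: "open S" "x0 \<in> S" and D1: "\<forall>x\<in>S. (phi has_derivative (\<lambda>h. Dphi x \<bullet> h)) (at x)"
    and D2: "(Dphi has_derivative (\<lambda>h. M *v h)) (at x0)" and e: "e > 0"
  shows "\<exists>d>0. ball x0 d \<subseteq> S \<and> (\<forall>y. norm y < d \<longrightarrow>
     \<bar>phi (x0 + y) - phi x0 - Dphi x0 \<bullet> y - (1/2) * (y \<bullet> (M *v y))\<bar> \<le> e * (norm y)^2)"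
proof -
  obtain d1 where d1: "d1 > 0" "\<forall>y. norm y < d1 \<longrightarrow> norm (Dphi (x0 + y) - Dphi x0 - M *v y) \<le> e * norm y"
    using has_derivative_remainder_bound[OF D2 e] by blast
  obtain d2 where d2: "d2 > 0" "ball x0 d2 \<subseteq> S" using S open_contains_ball by blast
  define d where "d = min d1 d2"
  have "\<bar>phi (x0 + y) - phi x0 - Dphi x0 \<bullet> y - (1/2) * (y \<bullet> (M *v y))\<bar> \<le> e * (norm y)^2"
    if y: "norm y < d" for y
  proof -
    define g where "g t = phi (x0 + t *\<^sub>R y) - t * (Dphi x0 \<bullet> y) - t^2/2 * (y \<bullet> (M *v y))" for t
    define g' where "g' t = (Dphi (x0 + t *\<^sub>R y) - Dphi x0 - M *v (t *\<^sub>R y)) \<bullet> y" for t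
    have small: "norm (t *\<^sub>R y) < d" if "0 \<le> t" "t \<le> 1" for t
      using y that mult_left_le_one_le[of "norm y" t] by simp
    have "(g has_real_derivative g' t) (at t)" if "0 \<le> t" "t \<le> 1" for t
    proof -
      have "x0 + t *\<^sub>R y \<in> S"
        using small[OF that] d2(2) by (auto simp: d_def dist_norm)
      then show ?thesis
        unfolding g_def g'_def
        using has_real_derivative_along_line[of phi Dphi x0 t y] D1
        by (auto intro!: derivative_eq_intros simp: power2_eq_square inner_diff_left
            matrix_vector_mult_scaleR inner_commute[of y "M *v y"])
    qed
    then obtain z where z: "0 < z" "z < 1" "g 1 - g 0 = g' z"
      using MVT2[of 0 1 g g'] by auto
    have "\<bar>g' z\<bar> \<le> norm (Dphi (x0 + z *\<^sub>R y) - Dphi x0 - M *v (z *\<^sub>R y)) * norm y"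
      unfolding g'_def by (rule Cauchy_Schwarz_ineq2)
    also have "\<dots> \<le> (e * norm (z *\<^sub>R y)) * norm y"
    proof (rule mult_right_mono)
      have "norm (z *\<^sub>R y) < d1" using small[of z] z by (simp add: d_def)
      then show "norm (Dphi (x0 + z *\<^sub>R y) - Dphi x0 - M *v (z *\<^sub>R y)) \<le> e * norm (z *\<^sub>R y)"
        using d1(2) by blast
    qed simp
    also have "\<dots> \<le> e * (norm y)^2"
      using z e by (simp add: power2_eq_square mult_left_le_one_le)
    finally show ?thesis using z(3) by (simp add: g_def)
  qed
  moreover have "d > 0" "ball x0 d \<subseteq> S" using d1 d2 by (auto simp: d_def)
  ultimately show ?thesis by blast
qed

lemma mixed_difference_mean_value:
  fixes phi :: "'a::real_inner \<Rightarrow> real"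
  assumes D1: "\<forall>x\<in>S. (phi has_derivative (\<lambda>h. Dphi x \<bullet> h)) (at x)" and "s > 0"
    and segments: "\<And>t. 0 \<le> t \<Longrightarrow> t \<le> s \<Longrightarrow> p + t *\<^sub>R a \<in> S \<and> q + t *\<^sub>R a \<in> S"
  obtains z where "0 < z" "z < s"
    "phi (p + s *\<^sub>R a) - phi p - (phi (q + s *\<^sub>R a) - phi q)
      = s * ((Dphi (p + z *\<^sub>R a) - Dphi (q + z *\<^sub>R a)) \<bullet> a)"
proof -
  define g where "g t = phi (p + t *\<^sub>R a) - phi (q + t *\<^sub>R a)" for t
  have "(g has_real_derivative (Dphi (p + t *\<^sub>R a) - Dphi (q + t *\<^sub>R a)) \<bullet> a) (at t)"
    if "0 \<le> t" "t \<le> s" for t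
    unfolding g_def inner_diff_left
    using has_real_derivative_along_line[of phi Dphi p t a]
      has_real_derivative_along_line[of phi Dphi q t a] D1 segments[OF that]
    by (auto intro!: derivative_eq_intros)
  from MVT2[OF \<open>s > 0\<close> this] show ?thesis
    using that by (auto simp: g_def algebra_simps)
qed

lemma mixed_second_difference_bound:
  fixes phi :: "real^'n \<Rightarrow> real" and M :: "real^'n^'n"
  assumes D1: "\<forall>x\<in>S. (phi has_derivative (\<lambda>h. Dphi x \<bullet> h)) (at x)" and ball: "ball x0 r \<subseteq> S"
    and increment: "\<And>w w'. norm w < r \<Longrightarrow> norm w' < r \<Longrightarrow>
      norm (Dphi (x0 + w) - Dphi (x0 + w') - M *v (w - w')) \<le> \<epsilon> * (norm w + norm w')"
    and "0 \<le> \<epsilon>" and s: "0 < s" "s * (norm a + norm b) < r"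
  shows "\<bar>phi (x0 + s *\<^sub>R a + s *\<^sub>R b) - phi (x0 + s *\<^sub>R a) - phi (x0 + s *\<^sub>R b) + phi x0
       - s^2 * ((M *v b) \<bullet> a)\<bar> \<le> 2 * \<epsilon> * s^2 * (norm a + norm b) * norm a"
proof -
  have short: "norm (t *\<^sub>R a + t' *\<^sub>R b) \<le> s * (norm a + norm b)"
    if "0 \<le> t" "t \<le> s" "0 \<le> t'" "t' \<le> s" for t t'
  proof -
    have "norm (t *\<^sub>R a + t' *\<^sub>R b) \<le> t * norm a + t' * norm b"
      using that norm_triangle_ineq[of "t *\<^sub>R a" "t' *\<^sub>R b"] by simp
    also have "\<dots> \<le> s * (norm a + norm b)"
      using that by (simp add: distrib_left add_mono mult_right_mono)
    finally show ?thesis .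
  qed
  have "x0 + s *\<^sub>R b + t *\<^sub>R a \<in> S \<and> x0 + t *\<^sub>R a \<in> S" if "0 \<le> t" "t \<le> s" for t
  proof -
    have "norm (s *\<^sub>R b + t *\<^sub>R a) < r" "norm (t *\<^sub>R a) < r"
      using short[of t s] short[of t 0] that s by (simp_all add: add.commute)
    moreover have "dist x0 (x0 + w) = norm w" for w by (simp add: dist_norm)
    ultimately have "x0 + (s *\<^sub>R b + t *\<^sub>R a) \<in> ball x0 r" "x0 + t *\<^sub>R a \<in> ball x0 r"
      by (simp_all only: mem_ball)
    then show ?thesis using ball by (auto simp: add.assoc)
  qed
  then obtain z where z: "0 < z" "z < s"
    and mvt: "phi (x0 + s *\<^sub>R b + s *\<^sub>R a) - phi (x0 + s *\<^sub>R b) - (phi (x0 + s *\<^sub>R a) - phi x0)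
      = s * ((Dphi (x0 + s *\<^sub>R b + z *\<^sub>R a) - Dphi (x0 + z *\<^sub>R a)) \<bullet> a)"
    using mixed_difference_mean_value[OF D1 \<open>s > 0\<close>, of "x0 + s *\<^sub>R b" a x0] by blast
  let ?w = "z *\<^sub>R a + s *\<^sub>R b" and ?w' = "z *\<^sub>R a + 0 *\<^sub>R b"
  have "phi (x0 + s *\<^sub>R a + s *\<^sub>R b) - phi (x0 + s *\<^sub>R a) - phi (x0 + s *\<^sub>R b) + phi x0
      - s^2 * ((M *v b) \<bullet> a) = s * ((Dphi (x0 + ?w) - Dphi (x0 + ?w') - M *v (?w - ?w')) \<bullet> a)"
    using mvt by (simp add: add_ac inner_diff_left matrix_vector_mult_scaleR algebra_simps
        power2_eq_square)
  also have "\<bar>\<dots>\<bar> \<le> s * (norm (Dphi (x0 + ?w) - Dphi (x0 + ?w') - M *v (?w - ?w')) * norm a)"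
    using s by (simp add: abs_mult Cauchy_Schwarz_ineq2 mult_left_mono)
  also have "\<dots> \<le> s * (\<epsilon> * (norm ?w + norm ?w') * norm a)"
    using short[of z s] short[of z 0] z s by (intro mult_left_mono mult_right_mono increment) auto
  also have "\<dots> \<le> s * (\<epsilon> * (2 * (s * (norm a + norm b))) * norm a)"
    using short[of z s] short[of z 0] z s \<open>0 \<le> \<epsilon>\<close>
    by (intro mult_left_mono mult_right_mono) auto
  finally show ?thesis by (simp add: power2_eq_square mult_ac)
qed

lemma mixed_second_difference:
  fixes phi :: "real^'n \<Rightarrow> real" and M :: "real^'n^'n"
  assumes S: "open S" "x0 \<in> S" and D1: "\<forall>x\<in>S. (phi has_derivative (\<lambda>h. Dphi x \<bullet> h)) (at x)"
    and D2: "(Dphi has_derivative (\<lambda>h. M *v h)) (at x0)" and e: "e > 0"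
  shows "\<exists>d>0. \<forall>s. 0 < s \<and> s < d \<longrightarrow>
    \<bar>phi (x0 + s *\<^sub>R a + s *\<^sub>R b) - phi (x0 + s *\<^sub>R a) - phi (x0 + s *\<^sub>R b) + phi x0
       - s^2 * ((M *v b) \<bullet> a)\<bar> \<le> e * s^2"
proof -
  define C where "C = 2 * (norm a + norm b) * norm a + 1"
  have C: "C > 0" by (simp add: C_def add_nonneg_pos)
  have "e / C > 0" using e C by simp
  then obtain d1 where "d1 > 0" and increment: "\<And>w w'. norm w < d1 \<Longrightarrow> norm w' < d1 \<Longrightarrow>
      norm (Dphi (x0 + w) - Dphi (x0 + w') - M *v (w - w')) \<le> e / C * (norm w + norm w')"
    using has_derivative_increment_bound[OF D2] by metis
  obtain d2 where "d2 > 0" "ball x0 d2 \<subseteq> S" using S open_contains_ball by blast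
  define d where "d = min d1 d2 / (norm a + norm b + 1)"
  have "\<bar>phi (x0 + s *\<^sub>R a + s *\<^sub>R b) - phi (x0 + s *\<^sub>R a) - phi (x0 + s *\<^sub>R b) + phi x0
       - s^2 * ((M *v b) \<bullet> a)\<bar> \<le> e * s^2" if s: "0 < s" "s < d" for s
  proof -
    have "s * (norm a + norm b) \<le> s * (norm a + norm b + 1)" using s by simp
    also have "\<dots> < min d1 d2"
      using s(2) pos_less_divide_eq[of "norm a + norm b + 1"] by (simp add: d_def add_nonneg_pos)
    finally have "s * (norm a + norm b) < min d1 d2" .
    then have "\<bar>phi (x0 + s *\<^sub>R a + s *\<^sub>R b) - phi (x0 + s *\<^sub>R a) - phi (x0 + s *\<^sub>R b) + phi x0
       - s^2 * ((M *v b) \<bullet> a)\<bar> \<le> 2 * (e / C) * s^2 * (norm a + norm b) * norm a"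
      using \<open>ball x0 d2 \<subseteq> S\<close> increment \<open>e / C > 0\<close> s(1)
      by (intro mixed_second_difference_bound[OF D1, where r = "min d1 d2"]) auto
    also have "\<dots> \<le> e * s^2"
      using e s C by (simp add: C_def field_simps)
    finally show ?thesis .
  qed
  moreover have "d > 0" using \<open>d1 > 0\<close> \<open>d2 > 0\<close> by (simp add: d_def add_nonneg_pos)
  ultimately show ?thesis by blast
qed

text \<open>The mixed second difference is symmetric in \<open>a\<close>
  and \<open>b\<close>, but is asymptotic both to \<open>s\<^sup>2 (M b)\<bullet>a\<close> and to \<open>s\<^sup>2 (M a)\<bullet>b\<close>.\<close>
lemma derivative_gradient_sym_matrix:
  fixes phi :: "real^'n \<Rightarrow> real" and M :: "real^'n^'n"
  assumes S: "open S" "x0 \<in> S" and D1: "\<forall>x\<in>S. (phi has_derivative (\<lambda>h. Dphi x \<bullet> h)) (at x)"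
    and D2: "(Dphi has_derivative (\<lambda>h. M *v h)) (at x0)"
  shows "sym_matrix M"
proof -
  have "(M *v b) \<bullet> a = (M *v a) \<bullet> b" for a b
  proof (rule ccontr)
    assume ne: "(M *v b) \<bullet> a \<noteq> (M *v a) \<bullet> b"
    define \<eta> where "\<eta> = \<bar>(M *v b) \<bullet> a - (M *v a) \<bullet> b\<bar> / 4"
    have \<eta>: "\<eta> > 0" using ne by (simp add: \<eta>_def)
    define \<Delta> where "\<Delta> s = phi (x0 + s *\<^sub>R a + s *\<^sub>R b) - phi (x0 + s *\<^sub>R a) - phi (x0 + s *\<^sub>R b) + phi x0"
      for s
    obtain d1 where d1: "d1 > 0" "\<forall>s. 0 < s \<and> s < d1 \<longrightarrow> \<bar>\<Delta> s - s^2 * ((M *v b) \<bullet> a)\<bar> \<le> \<eta> * s^2"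
      using mixed_second_difference[OF S D1 D2 \<eta>, of a b] unfolding \<Delta>_def by blast
    have \<Delta>_swap: "\<Delta> s = phi (x0 + s *\<^sub>R b + s *\<^sub>R a) - phi (x0 + s *\<^sub>R b) - phi (x0 + s *\<^sub>R a) + phi x0"
      for s
      by (simp add: \<Delta>_def add_ac)
    obtain d2 where d2: "d2 > 0" "\<forall>s. 0 < s \<and> s < d2 \<longrightarrow> \<bar>\<Delta> s - s^2 * ((M *v a) \<bullet> b)\<bar> \<le> \<eta> * s^2"
      using mixed_second_difference[OF S D1 D2 \<eta>, of b a] unfolding \<Delta>_swap by blast
    define s where "s = min d1 d2 / 2"
    have s: "0 < s" "s < d1" "s < d2" using d1 d2 by (auto simp: s_def)
    have "(\<Delta> s - s^2 * ((M *v a) \<bullet> b)) - (\<Delta> s - s^2 * ((M *v b) \<bullet> a))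
        = s^2 * ((M *v b) \<bullet> a - (M *v a) \<bullet> b)"
      by (simp add: algebra_simps)
    then have "s^2 * (4 * \<eta>) = \<bar>(\<Delta> s - s^2 * ((M *v a) \<bullet> b)) - (\<Delta> s - s^2 * ((M *v b) \<bullet> a))\<bar>"
      by (simp add: \<eta>_def abs_mult)
    also have "\<dots> \<le> \<bar>\<Delta> s - s^2 * ((M *v a) \<bullet> b)\<bar> + \<bar>\<Delta> s - s^2 * ((M *v b) \<bullet> a)\<bar>"
      by (rule abs_triangle_ineq4)
    also have "\<dots> \<le> 2 * \<eta> * s^2" using d1(2) d2(2) s by force
    finally show False using s \<eta> by simp
  qed
  then have "M$j$i = M$i$j" for i j
    using inner_axis_matrix_axis[of j M i] inner_axis_matrix_axis[of i M j] by (simp add: inner_commute)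
  then show ?thesis by (simp add: sym_matrix_def vec_eq_iff transpose_def)
qed

section \<open>Quadratic test functions\<close>

definition quadratic :: "real \<Rightarrow> real^'n \<Rightarrow> real^'n^'n \<Rightarrow> real^'n \<Rightarrow> real^'n \<Rightarrow> real" where
  "quadratic c b A z x = c + b \<bullet> (x - z) + (1/2) * ((x - z) \<bullet> (A *v (x - z)))"

lemma matrix_vector_mult_diff_has_derivative:
  "((\<lambda>x. A *v (x - z)) has_derivative (\<lambda>h. A *v h)) (at (x::real^'n))"
proof -
  have "((\<lambda>x. x - z) has_derivative (\<lambda>h. h)) (at x)" by (auto intro!: derivative_eq_intros)
  from bounded_linear.has_derivative[OF matrix_vector_mul_bounded_linear this] show ?thesis .
qed

lemma quadratic_has_derivative:
  assumes "sym_matrix A"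
  shows "(quadratic c b A z has_derivative (\<lambda>h. (b + A *v (x - z)) \<bullet> h)) (at x)"
proof -
  note matrix_vector_mult_diff_has_derivative[of A z x]
  then have "(quadratic c b A z has_derivative
      (\<lambda>h. b \<bullet> h + (1/2) * (h \<bullet> (A *v (x - z)) + (x - z) \<bullet> (A *v h)))) (at x)"
    unfolding quadratic_def[abs_def] by (auto intro!: derivative_eq_intros)
  moreover have "b \<bullet> h + (1/2) * (h \<bullet> (A *v (x - z)) + (x - z) \<bullet> (A *v h)) = (b + A *v (x - z)) \<bullet> h" for h
  proof -
    have "(x - z) \<bullet> (A *v h) = (A *v (x - z)) \<bullet> h" using sym_matrix_inner[OF assms, of "x - z" h] by simp
    moreover have "h \<bullet> (A *v (x - z)) = (A *v (x - z)) \<bullet> h" by (rule inner_commute)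
    ultimately show ?thesis by (simp add: inner_add_left)
  qed
  ultimately show ?thesis by simp
qed

lemma C2_on_with_quadratic:
  assumes "sym_matrix A" "open T"
  shows "C2_on_with (quadratic c b A z) (\<lambda>x. b + A *v (x - z)) (\<lambda>x. A) T"
  unfolding C2_on_with_def
proof (intro conjI ballI)
  fix x
  show "(quadratic c b A z has_derivative (\<lambda>h. (b + A *v (x - z)) \<bullet> h)) (at x)"
    by (rule quadratic_has_derivative[OF assms(1)])
  show "((\<lambda>x. b + A *v (x - z)) has_derivative (\<lambda>h. A *v h)) (at x)"
    using matrix_vector_mult_diff_has_derivative[of A z x] by (auto intro!: derivative_eq_intros)
qed (auto simp: assms)

lemma continuous_on_quadratic: "sym_matrix A \<Longrightarrow> continuous_on U (quadratic c b A z)"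
  by (meson continuous_at_imp_continuous_on has_derivative_continuous quadratic_has_derivative)

lemma tilted_maximum_in_ball:
  fixes u :: "real^'n \<Rightarrow> real"
  assumes u: "continuous_on (cball x0 \<rho>) u" and \<rho>: "\<rho> > 0" and e: "e > 0" and A: "sym_matrix A"
    and contact: "u x0 = c"
    and below: "\<forall>x\<in>cball x0 \<rho>. u x \<le> quadratic c \<xi> A x0 x - e * (norm (x - x0))^2"
    and h: "norm h = e * \<rho> / 2"
  obtains x1 where "x1 \<in> ball x0 \<rho>"
    "\<forall>x\<in>cball x0 \<rho>. u x - quadratic c \<xi> A x0 x - h \<bullet> (x - x0)
        \<le> u x1 - quadratic c \<xi> A x0 x1 - h \<bullet> (x1 - x0)"
    "h \<bullet> (x1 - x0) \<le> - e * (norm (x1 - x0))^2"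
proof -
  define f where "f x = u x - quadratic c \<xi> A x0 x - h \<bullet> (x - x0)" for x
  have "continuous_on (cball x0 \<rho>) f"
    unfolding f_def by (intro continuous_intros u continuous_on_quadratic[OF A])
  moreover have "cball x0 \<rho> \<noteq> {}" using \<rho> by simp
  ultimately obtain x1 where x1: "x1 \<in> cball x0 \<rho>" and max: "\<forall>x\<in>cball x0 \<rho>. f x \<le> f x1"
    using continuous_attains_sup[OF compact_cball] by blast
  define y1 where "y1 = x1 - x0"
  have "f x0 = 0" by (simp add: f_def quadratic_def contact)
  moreover have "f x0 \<le> f x1" using max \<rho> by simp
  ultimately have "0 \<le> f x1" by simp
  moreover have "u x1 \<le> quadratic c \<xi> A x0 x1 - e * (norm (x1 - x0))^2" using below x1 by blast
  ultimately have hy1: "h \<bullet> y1 \<le> - e * (norm y1)^2"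
    unfolding f_def y1_def by linarith
  have "norm y1 \<le> \<rho> / 2"
  proof (cases "y1 = 0")
    case False
    have "e * (norm y1)^2 \<le> - (h \<bullet> y1)" using hy1 by simp
    also have "\<dots> \<le> norm h * norm y1" using norm_cauchy_schwarz[of "- h" y1] by simp
    finally have "(e * norm y1) * norm y1 \<le> (e * (\<rho> / 2)) * norm y1"
      by (simp add: h power2_eq_square mult_ac)
    then have "e * norm y1 \<le> e * (\<rho> / 2)"
      by (rule mult_right_le_imp_le) (use False in simp)
    then show ?thesis using e by simp
  qed (use \<rho> in simp)
  then have "x1 \<in> ball x0 \<rho>"
    using \<rho> by (simp add: y1_def dist_norm norm_minus_commute)
  with max hy1 show ?thesis using that unfolding f_def y1_def by blast
qed

text \<open>The quadratic is tilted by \<open>h = -t A d\<close> and lowered until it touches \<open>u\<close> again, at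
  \<open>x0 + y\<close> say, where \<open>h\<bullet>y \<le> 0\<close>.  Gradient \<open>\<xi>\<close> there would mean \<open>A y = t A d\<close>, hence
  \<open>h\<bullet>y = -t\<^sup>2 d\<bullet>A d > 0\<close>.\<close>
lemma tilted_quadratic_touches_above:
  fixes u :: "real^'n \<Rightarrow> real"
  assumes u: "continuous_on (cball x0 \<rho>) u" and \<rho>: "\<rho> > 0" and e: "e > 0"
    and A: "sym_matrix A" and d: "d \<bullet> (A *v d) < 0"
    and contact: "u x0 = c"
    and below: "\<forall>x\<in>cball x0 \<rho>. u x \<le> quadratic c \<xi> A x0 x - e * (norm (x - x0))^2"
  obtains c' b y where "y \<in> ball x0 \<rho>" "u y = quadratic c' b A x0 y"
    "\<forall>x\<in>ball x0 \<rho>. u x \<le> quadratic c' b A x0 x" "b + A *v (y - x0) \<noteq> \<xi>"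
proof -
  have Ad: "A *v d \<noteq> 0" using d by auto
  define t where "t = e * \<rho> / (2 * norm (A *v d))"
  have t: "t > 0" using e \<rho> Ad by (simp add: t_def)
  define h where "h = - (t *\<^sub>R (A *v d))"
  have "norm h = e * \<rho> / 2" using Ad e \<rho> by (simp add: h_def t_def)
  then obtain x1 where x1: "x1 \<in> ball x0 \<rho>"
    and max: "\<forall>x\<in>cball x0 \<rho>. u x - quadratic c \<xi> A x0 x - h \<bullet> (x - x0)
        \<le> u x1 - quadratic c \<xi> A x0 x1 - h \<bullet> (x1 - x0)"
    and hx1: "h \<bullet> (x1 - x0) \<le> - e * (norm (x1 - x0))^2"
    by (rule tilted_maximum_in_ball[OF u \<rho> e A contact below])
  define c' where "c' = u x1 - quadratic c \<xi> A x0 x1 - h \<bullet> (x1 - x0) + c"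
  have shift: "quadratic c' (\<xi> + h) A x0 x = quadratic c \<xi> A x0 x + h \<bullet> (x - x0) + (c' - c)" for x
    by (simp add: quadratic_def inner_add_left algebra_simps)
  show ?thesis
  proof (rule that[OF x1])
    show "u x1 = quadratic c' (\<xi> + h) A x0 x1" unfolding shift by (simp add: c'_def)
    show "\<forall>x\<in>ball x0 \<rho>. u x \<le> quadratic c' (\<xi> + h) A x0 x"
    proof
      fix x assume "x \<in> ball x0 \<rho>"
      then have "u x - quadratic c \<xi> A x0 x - h \<bullet> (x - x0) \<le> c' - c"
        using max by (auto simp: c'_def)
      then show "u x \<le> quadratic c' (\<xi> + h) A x0 x" unfolding shift by linarith
    qed
    show "\<xi> + h + A *v (x1 - x0) \<noteq> \<xi>"
    proof
      assume "\<xi> + h + A *v (x1 - x0) = \<xi>"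
      then have "A *v (x1 - x0) = t *\<^sub>R (A *v d)" by (simp add: h_def algebra_simps)
      then have "h \<bullet> (x1 - x0) = - (t * t) * (d \<bullet> (A *v d))"
        by (simp add: h_def sym_matrix_inner[OF A])
      then have "h \<bullet> (x1 - x0) > 0" using d t by (simp add: mult_pos_neg)
      moreover have "0 \<le> e * (norm (x1 - x0))^2" using e by simp
      ultimately show False using hx1 by linarith
    qed
  qed
qed

lemma touching_below_quadratic:
  fixes u phi :: "real^'n \<Rightarrow> real"
  assumes S: "open S" "x0 \<in> S" and Om: "open Om" "x0 \<in> Om"
    and touch: "u x0 = phi x0" "\<forall>x\<in>S \<inter> Om. u x \<le> phi x"
    and D1: "\<forall>x\<in>S. (phi has_derivative (\<lambda>h. Dphi x \<bullet> h)) (at x)"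
    and D2: "(Dphi has_derivative (\<lambda>h. M *v h)) (at x0)" and e: "e > 0"
  obtains \<rho> where "\<rho> > 0" "cball x0 \<rho> \<subseteq> Om"
    "\<forall>x\<in>cball x0 \<rho>. u x \<le> quadratic (phi x0) (Dphi x0) (M + mat e) x0 x - e / 4 * (norm (x - x0))^2"
proof -
  obtain \<delta> where \<delta>: "\<delta> > 0" "ball x0 \<delta> \<subseteq> S" and taylor: "\<forall>y. norm y < \<delta> \<longrightarrow>
      \<bar>phi (x0 + y) - phi x0 - Dphi x0 \<bullet> y - (1/2) * (y \<bullet> (M *v y))\<bar> \<le> e / 4 * (norm y)^2"
    using second_order_expansion[OF S D1 D2, of "e / 4"] e by auto
  obtain \<delta>' where \<delta>': "\<delta>' > 0" "ball x0 \<delta>' \<subseteq> Om" using Om open_contains_ball by blast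
  define \<rho> where "\<rho> = min \<delta> \<delta>' / 2"
  have \<rho>: "\<rho> > 0" "cball x0 \<rho> \<subseteq> ball x0 \<delta> \<inter> ball x0 \<delta>'"
    using \<delta> \<delta>' by (auto simp: \<rho>_def subset_iff)
  have "u x \<le> quadratic (phi x0) (Dphi x0) (M + mat e) x0 x - e / 4 * (norm (x - x0))^2"
    if x: "x \<in> cball x0 \<rho>" for x
  proof -
    define y where "y = x - x0"
    have "norm y < \<delta>" using \<rho>(2) x by (auto simp: y_def dist_norm norm_minus_commute)
    have "x \<in> S \<inter> Om" using \<rho>(2) \<delta>(2) \<delta>'(2) x by blast
    then have "u x \<le> phi (x0 + y)" using touch(2) by (simp add: y_def)
    also have "\<dots> \<le> phi x0 + Dphi x0 \<bullet> y + (1/2) * (y \<bullet> (M *v y)) + e / 4 * (norm y)^2"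
      using abs_le_D1[OF taylor[rule_format, OF \<open>norm y < \<delta>\<close>]] by linarith
    also have "\<dots> = quadratic (phi x0) (Dphi x0) (M + mat e) x0 x - e / 4 * (norm (x - x0))^2"
      by (simp add: quadratic_def y_def[symmetric] matrix_vector_mult_add_rdistrib
          matrix_vector_mult_mat inner_add_right power2_norm_eq_inner algebra_simps)
    finally show ?thesis .
  qed
  moreover have "cball x0 \<rho> \<subseteq> Om" using \<rho>(2) \<delta>'(2) by blast
  ultimately show ?thesis using that \<rho>(1) by blast
qed

section \<open>Removing the degenerate factor\<close>

lemma A1_nonneg_at_degenerate_gradient:
  fixes F :: "real^'n^'n \<Rightarrow> real" and u phi :: "real^'n \<Rightarrow> real"
  assumes F: "A1 lam Lam F" and Om: "open Om" and u: "continuous_on Om u"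
    and quadratic_tests: "\<And>c b A z y T. sym_matrix A \<Longrightarrow> open T \<Longrightarrow> T \<subseteq> Om \<Longrightarrow> y \<in> T \<Longrightarrow>
        u y = quadratic c b A z y \<Longrightarrow> \<forall>x\<in>T. u x \<le> quadratic c b A z x \<Longrightarrow>
        b + A *v (y - z) \<noteq> \<xi> \<Longrightarrow> 0 \<le> F A"
    and S: "open S" "x0 \<in> S" "x0 \<in> Om"
    and touch: "u x0 = phi x0" "\<forall>x\<in>S \<inter> Om. u x \<le> phi x"
    and D1: "\<forall>x\<in>S. (phi has_derivative (\<lambda>h. Dphi x \<bullet> h)) (at x)"
    and D2: "(Dphi has_derivative (\<lambda>h. M *v h)) (at x0)" and grad: "Dphi x0 = \<xi>"
  shows "0 \<le> F M"
proof -
  have M: "sym_matrix M" using derivative_gradient_sym_matrix[OF S(1,2) D1 D2] .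
  have "0 \<le> F (M + mat e)" if e: "e > 0" for e
  proof -
    define A where "A = M + mat e"
    have A: "sym_matrix A" unfolding A_def by (intro sym_matrix_add M sym_matrix_mat)
    show ?thesis
    proof (cases "psd_matrix A")
      case True
      then show ?thesis using A1_nonneg[OF F A] by (simp add: A_def)
    next
      case False
      then obtain d where d: "d \<bullet> (A *v d) < 0" unfolding psd_matrix_def by (auto simp: not_le)
      obtain \<rho> where \<rho>: "\<rho> > 0" "cball x0 \<rho> \<subseteq> Om"
        and below: "\<forall>x\<in>cball x0 \<rho>. u x \<le> quadratic (phi x0) \<xi> A x0 x - e / 4 * (norm (x - x0))^2"
        using touching_below_quadratic[OF S(1,2) Om S(3) touch D1 D2 e] unfolding A_def grad .
      have "e / 4 > 0" using e by simp
      obtain c b y where "y \<in> ball x0 \<rho>" "u y = quadratic c b A x0 y"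
        "\<forall>x\<in>ball x0 \<rho>. u x \<le> quadratic c b A x0 x" "b + A *v (y - x0) \<noteq> \<xi>"
        using tilted_quadratic_touches_above[OF continuous_on_subset[OF u \<rho>(2)] \<rho>(1)
            \<open>e / 4 > 0\<close> A d touch(1) below] .
      moreover have "ball x0 \<rho> \<subseteq> Om" using \<rho>(2) by auto
      ultimately have "0 \<le> F A" using quadratic_tests[OF A open_ball] by blast
      then show ?thesis by (simp add: A_def)
    qed
  qed
  then show ?thesis by (rule A1_nonneg_of_nonneg_add_mat[OF F M])
qed

lemma open_half_ball: "open (half_ball k r)"
proof -
  have "half_ball k r = ball 0 r \<inter> {x. x$k > 0}" by (auto simp: half_ball_def)
  then show ?thesis by (simp add: open_Int open_halfspace_component_gt_cart)
qed

lemma visc_sub_cancel_positive_factor: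
  fixes F :: "real^'n^'n \<Rightarrow> real" and h :: "real^'n \<Rightarrow> real^'n \<Rightarrow> real"
  assumes F: "A1 lam Lam F" and h: "\<And>x z. z \<noteq> \<xi> \<Longrightarrow> 0 < h x z"
    and u: "continuous_on (half_ball k r) u"
    and sub: "visc_sub k r (\<lambda>x z M. h x z * F M) beta g u"
  shows "visc_sub k r (\<lambda>x z M. F M) beta g u"
  unfolding visc_sub_def
proof (intro allI impI)
  fix phi Dphi D2phi S x0
  assume H: "C2_on_with phi Dphi D2phi S \<and> x0 \<in> S \<and> x0 \<in> half_ball k r \<union> flat_part k r \<and>
    u x0 = phi x0 \<and> (\<forall>x\<in>S \<inter> (half_ball k r \<union> flat_part k r). u x \<le> phi x)"
  then have old: "(x0 \<in> half_ball k r \<longrightarrow> 0 \<le> h x0 (Dphi x0) * F (D2phi x0)) \<and>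
      (x0 \<in> flat_part k r \<longrightarrow> g x0 \<le> beta x0 \<bullet> Dphi x0)"
    using sub unfolding visc_sub_def by blast
  have "0 \<le> F (D2phi x0)" if x0: "x0 \<in> half_ball k r"
  proof (cases "Dphi x0 = \<xi>")
    case False
    then show ?thesis using old x0 h[OF False, of x0] by (simp add: zero_le_mult_iff)
  next
    case True
    from H have S: "open S" "x0 \<in> S" and touch: "u x0 = phi x0" "\<forall>x\<in>S \<inter> half_ball k r. u x \<le> phi x"
      and D1: "\<forall>x\<in>S. (phi has_derivative (\<lambda>h. Dphi x \<bullet> h)) (at x)"
      and D2: "(Dphi has_derivative (\<lambda>h. D2phi x0 *v h)) (at x0)"
      by (auto simp: C2_on_with_def)
    show ?thesis
    proof (rule A1_nonneg_at_degenerate_gradient[OF F open_half_ball u _ S x0 touch D1 D2 True])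
      fix c b A z y T
      assume A: "sym_matrix A" and T: "open T" "T \<subseteq> half_ball k r" "y \<in> T"
        and contact: "u y = quadratic c b A z y" and above: "\<forall>x\<in>T. u x \<le> quadratic c b A z x"
        and grad: "b + A *v (y - z) \<noteq> \<xi>"
      have "C2_on_with (quadratic c b A z) (\<lambda>x. b + A *v (x - z)) (\<lambda>x. A) T \<and> y \<in> T \<and>
          y \<in> half_ball k r \<union> flat_part k r \<and> u y = quadratic c b A z y \<and>
          (\<forall>x\<in>T \<inter> (half_ball k r \<union> flat_part k r). u x \<le> quadratic c b A z x)"
        using C2_on_with_quadratic[OF A T(1)] T contact above by blast
      then have "0 \<le> h y (b + A *v (y - z)) * F A"
        using sub T unfolding visc_sub_def by blast
      then show "0 \<le> F A" using h[OF grad, of y] by (simp add: zero_le_mult_iff)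
    qed
  qed
  then show "(x0 \<in> half_ball k r \<longrightarrow> 0 \<le> F (D2phi x0)) \<and>
      (x0 \<in> flat_part k r \<longrightarrow> g x0 \<le> beta x0 \<bullet> Dphi x0)"
    using old by blast
qed

lemma C2_on_with_uminus:
  assumes "C2_on_with phi Dphi D2phi S"
  shows "C2_on_with (\<lambda>x. - phi x) (\<lambda>x. - Dphi x) (\<lambda>x. - D2phi x) S"
  unfolding C2_on_with_def
proof (intro conjI ballI)
  fix x assume "x \<in> S"
  then have "(phi has_derivative (\<lambda>h. Dphi x \<bullet> h)) (at x)"
    and "(Dphi has_derivative (\<lambda>h. D2phi x *v h)) (at x)"
    using assms by (auto simp: C2_on_with_def)
  from has_derivative_minus[OF this(1)] has_derivative_minus[OF this(2)]
  show "((\<lambda>x. - phi x) has_derivative (\<lambda>h. (- Dphi x) \<bullet> h)) (at x)"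
    and "((\<lambda>x. - Dphi x) has_derivative (\<lambda>h. (- D2phi x) *v h)) (at x)"
    by (simp_all add: matrix_vector_mult_uminus)
qed (use assms in \<open>auto simp: C2_on_with_def intro: continuous_on_minus\<close>)

lemma visc_super_iff_visc_sub_uminus:
  "visc_super k r G beta g u \<longleftrightarrow>
    visc_sub k r (\<lambda>x z M. - G x (- z) (- M)) beta (\<lambda>x. - g x) (\<lambda>x. - u x)"
proof
  assume super: "visc_super k r G beta g u"
  show "visc_sub k r (\<lambda>x z M. - G x (- z) (- M)) beta (\<lambda>x. - g x) (\<lambda>x. - u x)"
    unfolding visc_sub_def
  proof (intro allI impI)
    fix psi Dpsi D2psi S x0
    assume "C2_on_with psi Dpsi D2psi S \<and> x0 \<in> S \<and> x0 \<in> half_ball k r \<union> flat_part k r \<and>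
      - u x0 = psi x0 \<and> (\<forall>x\<in>S \<inter> (half_ball k r \<union> flat_part k r). - u x \<le> psi x)"
    then have "C2_on_with (\<lambda>x. - psi x) (\<lambda>x. - Dpsi x) (\<lambda>x. - D2psi x) S \<and> x0 \<in> S \<and>
      x0 \<in> half_ball k r \<union> flat_part k r \<and> u x0 = - psi x0 \<and>
      (\<forall>x\<in>S \<inter> (half_ball k r \<union> flat_part k r). - psi x \<le> u x)"
      using C2_on_with_uminus by force
    then show "(x0 \<in> half_ball k r \<longrightarrow> 0 \<le> - G x0 (- Dpsi x0) (- D2psi x0)) \<and>
      (x0 \<in> flat_part k r \<longrightarrow> - g x0 \<le> beta x0 \<bullet> Dpsi x0)"
      using super unfolding visc_super_def by fastforce
  qed
next
  assume sub: "visc_sub k r (\<lambda>x z M. - G x (- z) (- M)) beta (\<lambda>x. - g x) (\<lambda>x. - u x)"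
  show "visc_super k r G beta g u"
    unfolding visc_super_def
  proof (intro allI impI)
    fix phi Dphi D2phi S x0
    assume "C2_on_with phi Dphi D2phi S \<and> x0 \<in> S \<and> x0 \<in> half_ball k r \<union> flat_part k r \<and>
      u x0 = phi x0 \<and> (\<forall>x\<in>S \<inter> (half_ball k r \<union> flat_part k r). phi x \<le> u x)"
    then have "C2_on_with (\<lambda>x. - phi x) (\<lambda>x. - Dphi x) (\<lambda>x. - D2phi x) S \<and> x0 \<in> S \<and>
      x0 \<in> half_ball k r \<union> flat_part k r \<and> - u x0 = - phi x0 \<and>
      (\<forall>x\<in>S \<inter> (half_ball k r \<union> flat_part k r). - u x \<le> - phi x)"
      using C2_on_with_uminus by force
    then show "(x0 \<in> half_ball k r \<longrightarrow> G x0 (Dphi x0) (D2phi x0) \<le> 0) \<and>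
      (x0 \<in> flat_part k r \<longrightarrow> beta x0 \<bullet> Dphi x0 \<le> g x0)"
      using sub unfolding visc_sub_def by fastforce
  qed
qed

lemma Hfun_pos: "\<forall>x. a x \<ge> 0 \<Longrightarrow> z \<noteq> 0 \<Longrightarrow> 0 < Hfun p q a x z"
  unfolding Hfun_def by (simp add: add_pos_nonneg)

lemma Hfun_uminus: "Hfun p q a x (- z) = Hfun p q a x z"
  by (simp add: Hfun_def)

theorem lemma2p4:
  fixes k :: "'n::finite" and r lam Lam p q :: real
    and F :: "real^'n^'n \<Rightarrow> real" and a :: "real^'n \<Rightarrow> real"
    and xi :: "real^'n" and beta :: "real^'n \<Rightarrow> real^'n" and g u :: "real^'n \<Rightarrow> real"
  assumes "A1 lam Lam F"
    and "0 < p" and "p \<le> q"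
    and "continuous_on UNIV a" and "\<forall>x. a x \<ge> 0"
    and "r > 0"
    and "continuous_on (flat_part k r) beta" and "continuous_on (flat_part k r) g"
    and "visc_sol k r (\<lambda>x z M. Hfun p q a x (z - xi) * F M) beta g u"
  shows "visc_sol k r (\<lambda>x z M. F M) beta g u"
proof -
  \<comment> \<open>Only (A1), \<open>a \<ge> 0\<close> and the solution property are used: \<open>H(x, z) > 0\<close> for \<open>z \<noteq> 0\<close>
    whatever the exponents.\<close>
  note F = assms(1)
  have u: "continuous_on (half_ball k r \<union> flat_part k r) u"
    and sub: "visc_sub k r (\<lambda>x z M. Hfun p q a x (z - xi) * F M) beta g u"
    and super: "visc_super k r (\<lambda>x z M. Hfun p q a x (z - xi) * F M) beta g u"
    using assms(9) by (auto simp: visc_sol_def)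
  have u_cont: "continuous_on (half_ball k r) u" "continuous_on (half_ball k r) (\<lambda>x. - u x)"
    using continuous_on_subset[OF u] by (auto intro: continuous_on_minus)
  have H: "0 < Hfun p q a x (z - xi)" if "z \<noteq> xi" for x z
    using Hfun_pos[OF assms(5)] that by simp
  have H': "0 < Hfun p q a x (z + xi)" if "z \<noteq> - xi" for x z
    using Hfun_pos[OF assms(5)] that by (simp add: eq_neg_iff_add_eq_0)
  have "visc_sub k r (\<lambda>x z M. F M) beta g u"
    by (rule visc_sub_cancel_positive_factor[OF F H u_cont(1) sub])
  moreover have "visc_super k r (\<lambda>x z M. F M) beta g u"
  proof -
    have "visc_sub k r (\<lambda>x z M. Hfun p q a x (z + xi) * - F (- M)) beta (\<lambda>x. - g x) (\<lambda>x. - u x)"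
      using super unfolding visc_super_iff_visc_sub_uminus
      by (simp add: Hfun_uminus[of p q a _ "_ + xi", symmetric] add.commute)
    from visc_sub_cancel_positive_factor[OF A1_uminus_conj[OF F] H' u_cont(2) this]
    show ?thesis unfolding visc_super_iff_visc_sub_uminus by simp
  qed
  ultimately show ?thesis using u unfolding visc_sol_def by blast
qed

end
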